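(* In the two-tier residency matching game described in the context (list length $K$, high-match value $v>1$), under the large market approximation, a symmetric equilibrium for high doctors always exists.
   Context: Model: there are high-tier and low-tier doctors and high-tier and low-tier hospitals, each hospital having one position. Every hospital prefers every high doctor to every low doctor, and every doctor prefers every high hospital to every low hospital; within a tier, preferences are independent uniformly random permutations. Each doctor submits a ranked list of exactly $K$ hospitals; hospitals submit full true rankings; doctor-proposing deferred acceptance is run. A doctor's strategy is a pair $(k,K-k)$: he lists his $k$ most preferred high hospitals followed by his $K-k$ most preferred low hospitals. A doctor gets value $v>1$ if matched to a high hospital, $1$ if matched to a low one, $0$ otherwise. Large market approximation: in the limit of many agents (tier proportions, $K$, $v$ fixed), given the strategy profile, each application of a high doctor to a high (resp. low) hospital is accepted independently with a probability $p$ (resp. $p'$) determined by the aggregate profile via fixed-point equations (expected matched doctors = expected hospitals receiving at least one application, a hospital with on average $\lambda$ applications receiving none with probability $e^{-\lambda}$), and unaffected by an individual doctor's choice. Since hospitals rank all high doctors above low ones, the high doctors' assignment does not depend on low doctors. A symmetric equilibrium for high doctors is a (possibly mixed) strategy used by all high doctors such that every strategy in its support maximizes a high doctor's expected value given $p,p'$. *)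

theory Defs
  imports Complex_Main
begin

text \<open>
Masses (relative to market size) of high doctors
dH, high hospitals hH and low hospitals hL are fixed positive reals.
A mixed strategy for high doctors is a probability vector sigma on {0..K}:
sigma k is the share of high doctors using strategy (k, K-k).
p  = acceptance probability of an application of a high doctor to a high hospital,
p' = acceptance probability of an application of a high doctor to a low hospital.
\<close>

definition mixed_strategy :: "nat \<Rightarrow> (nat \<Rightarrow> real) \<Rightarrow> bool" where
  "mixed_strategy K \<sigma> \<longleftrightarrow> (\<forall>k\<le>K. 0 \<le> \<sigma> k) \<and> (\<Sum>k\<le>K. \<sigma> k) = 1"

text \<open>Expected value of strategy (k, K-k): v if matched high, 1 if matched low.\<close>
definition payoff :: "nat \<Rightarrow> real \<Rightarrow> real \<Rightarrow> real \<Rightarrow> nat \<Rightarrow> real" where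
  "payoff K v p p' k = v * (1 - (1 - p) ^ k) + (1 - p) ^ k * (1 - (1 - p') ^ (K - k))"

text \<open>Average number of high-doctor applications received by a high hospital.\<close>
definition lamH :: "nat \<Rightarrow> real \<Rightarrow> real \<Rightarrow> (nat \<Rightarrow> real) \<Rightarrow> real \<Rightarrow> real" where
  "lamH K dH hH \<sigma> p = dH / hH * (\<Sum>k\<le>K. \<sigma> k * (\<Sum>i<k. (1 - p) ^ i))"

text \<open>Average number of high-doctor applications received by a low hospital.\<close>
definition lamL :: "nat \<Rightarrow> real \<Rightarrow> real \<Rightarrow> (nat \<Rightarrow> real) \<Rightarrow> real \<Rightarrow> real \<Rightarrow> real" where
  "lamL K dH hL \<sigma> p p' = dH / hL * (\<Sum>k\<le>K. \<sigma> k * (1 - p) ^ k * (\<Sum>i<K - k. (1 - p') ^ i))"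

text \<open>Fixed-point equations: expected number of matched high doctors at high (low)
hospitals equals expected number of high (low) hospitals receiving at least one
application.  Convention: if a tier receives no applications, the acceptance
probability is 1 (the limit of (1 - exp(-x))/x as x tends to 0).\<close>
definition fixed_point ::
  "nat \<Rightarrow> real \<Rightarrow> real \<Rightarrow> real \<Rightarrow> (nat \<Rightarrow> real) \<Rightarrow> real \<Rightarrow> real \<Rightarrow> bool" where
  "fixed_point K dH hH hL \<sigma> p p' \<longleftrightarrow>
     0 < p \<and> p \<le> 1 \<and> 0 < p' \<and> p' \<le> 1 \<and>
     dH * (\<Sum>k\<le>K. \<sigma> k * (1 - (1 - p) ^ k)) = hH * (1 - exp (- lamH K dH hH \<sigma> p)) \<and>
     (lamH K dH hH \<sigma> p = 0 \<longrightarrow> p = 1) \<and>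
     dH * (\<Sum>k\<le>K. \<sigma> k * (1 - p) ^ k * (1 - (1 - p') ^ (K - k)))
        = hL * (1 - exp (- lamL K dH hL \<sigma> p p')) \<and>
     (lamL K dH hL \<sigma> p p' = 0 \<longrightarrow> p' = 1)"

definition best_responses :: "nat \<Rightarrow> real \<Rightarrow> (nat \<Rightarrow> real) \<Rightarrow> real \<Rightarrow> real \<Rightarrow> bool" where
  "best_responses K v \<sigma> p p' \<longleftrightarrow>
     (\<forall>k\<le>K. 0 < \<sigma> k \<longrightarrow> (\<forall>j\<le>K. payoff K v p p' j \<le> payoff K v p p' k))"

definition symmetric_equilibrium_high ::
  "nat \<Rightarrow> real \<Rightarrow> real \<Rightarrow> real \<Rightarrow> real \<Rightarrow> (nat \<Rightarrow> real) \<Rightarrow> bool" where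
  "symmetric_equilibrium_high K v dH hH hL \<sigma> \<longleftrightarrow>
     mixed_strategy K \<sigma> \<and>
     (\<exists>p p'. fixed_point K dH hH hL \<sigma> p p') \<and>
     (\<forall>p p'. fixed_point K dH hH hL \<sigma> p p' \<longrightarrow> best_responses K v \<sigma> p p')"

end

theory Submission
  imports Defs
begin

text \<open>
The expected payoff of strategy \<open>(k, K - k)\<close> is \<open>v\<close> minus
\<open>q ^ k * (v - 1 + r ^ (K - k))\<close> with \<open>q = 1 - p\<close>, \<open>r = 1 - p'\<close>,
and this is a discretely convex function of \<open>k\<close>, so a strategy without profitable
deviation to its neighbours is a best response. For every profile each tier's
fixed-point equation has a unique solution, and it depends continuously on the profile
because the equation is monotone in the acceptance probability. Now let \<open>k\<close> be the
least pure strategy that does not gain by moving up. Either it does not gain by moving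
down either, and is a pure equilibrium, or its predecessor \<open>m\<close> gains by moving up to
\<open>k\<close> while \<open>k\<close> gains by moving down to \<open>m\<close>; then by the intermediate value theorem
some mixture of \<open>m\<close> and \<open>k\<close> makes both equally good.
\<close>

lemma tendsto_root_of_mono_family:
  fixes G :: "'a \<Rightarrow> real \<Rightarrow> real" and G0 :: "real \<Rightarrow> real"
  assumes ev: "\<forall>\<^sub>F s in F. r s \<in> {a..b} \<and> G s (r s) = 0 \<and> mono_on {a..b} (G s)"
    and r0: "r0 \<in> {a..b}" "G0 r0 = 0" and strict: "strict_mono_on {a..b} G0"
    and lim: "\<And>x. x \<in> {a..b} \<Longrightarrow> ((\<lambda>s. G s x) \<longlongrightarrow> G0 x) F"
  shows "(r \<longlongrightarrow> r0) F"
proof (rule order_tendstoI)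
  fix y assume "y < r0"
  show "\<forall>\<^sub>F s in F. y < r s"
  proof (cases "y < a")
    case True
    with ev show ?thesis by (auto elim: eventually_mono)
  next
    case False
    with \<open>y < r0\<close> r0 have y: "y \<in> {a..b}" by auto
    have "G0 y < 0" using strict_mono_onD[OF strict y r0(1) \<open>y < r0\<close>] r0(2) by simp
    with lim[OF y] have "\<forall>\<^sub>F s in F. G s y < 0" by (rule order_tendstoD)
    with ev show ?thesis
    proof eventually_elim
      case (elim s)
      then show ?case using mono_onD[of "{a..b}" "G s" "r s" y] y by fastforce
    qed
  qed
next
  fix y assume "r0 < y"
  show "\<forall>\<^sub>F s in F. r s < y"
  proof (cases "b < y")
    case True
    with ev show ?thesis by (auto elim: eventually_mono)
  next
    case False
    with \<open>r0 < y\<close> r0 have y: "y \<in> {a..b}" by auto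
    have "0 < G0 y" using strict_mono_onD[OF strict r0(1) y \<open>r0 < y\<close>] r0(2) by simp
    with lim[OF y] have "\<forall>\<^sub>F s in F. 0 < G s y" by (rule order_tendstoD)
    with ev show ?thesis
    proof eventually_elim
      case (elim s)
      then show ?case using mono_onD[of "{a..b}" "G s" y "r s"] y by fastforce
    qed
  qed
qed

definition discrete_convex :: "nat \<Rightarrow> (nat \<Rightarrow> real) \<Rightarrow> bool" where
  "discrete_convex K f \<longleftrightarrow> (\<forall>j. 0 < j \<longrightarrow> j < K \<longrightarrow> 2 * f j \<le> f (j - 1) + f (Suc j))"

lemma discrete_convex_increment_mono:
  assumes "discrete_convex K f" "i \<le> j" "j < K"
  shows "f (Suc i) - f i \<le> f (Suc j) - f j"
  using assms(2,3)
proof (induction j rule: dec_induct)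
  case (step j)
  then have "2 * f (Suc j) \<le> f j + f (Suc (Suc j))"
    using assms(1) unfolding discrete_convex_def by (metis diff_Suc_1 zero_less_Suc)
  with step show ?case by simp
qed simp

lemma discrete_convex_local_min_is_min:
  assumes f: "discrete_convex K f" and "k \<le> K" "j \<le> K"
    and down: "0 < k \<Longrightarrow> f k \<le> f (k - 1)" and up: "k < K \<Longrightarrow> f k \<le> f (Suc k)"
  shows "f k \<le> f j"
proof (cases "k \<le> j")
  case True
  have "0 \<le> f (Suc i) - f i" if "i \<in> {k..<j}" for i
    using up discrete_convex_increment_mono[OF f, of k i] that \<open>j \<le> K\<close> by force
  then have "0 \<le> (\<Sum>i = k..<j. f (Suc i) - f i)" by (rule sum_nonneg)
  with True show ?thesis by (simp add: sum_Suc_diff')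
next
  case False
  then obtain m where m: "k = Suc m" by (cases k) auto
  have "f (Suc i) - f i \<le> 0" if "i \<in> {j..<k}" for i
    using down discrete_convex_increment_mono[OF f, of i m] that m \<open>k \<le> K\<close> by force
  then have "(\<Sum>i = j..<k. f (Suc i) - f i) \<le> 0" by (rule sum_nonpos)
  with False show ?thesis by (simp add: sum_Suc_diff')
qed

lemma discrete_convex_power_mix:
  fixes q r w :: real
  assumes "0 \<le> q" "0 \<le> r" "0 \<le> w"
  shows "discrete_convex K (\<lambda>j. q ^ j * (w + r ^ (K - j)))"
  unfolding discrete_convex_def
proof (intro allI impI)
  fix j assume "0 < j" "j < K"
  obtain m where m: "j = Suc m" using \<open>0 < j\<close> gr0_implies_Suc by blast
  obtain t where t: "K = Suc (j + t)" using \<open>j < K\<close> less_imp_Suc_add by blast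
  have "q ^ (j - 1) * (w + r ^ (K - (j - 1))) + q ^ Suc j * (w + r ^ (K - Suc j))
      - 2 * (q ^ j * (w + r ^ (K - j))) = q ^ m * (w * (1 - q)\<^sup>2 + r ^ t * (r - q)\<^sup>2)"
    unfolding m t by (simp add: power2_eq_square algebra_simps)
  moreover have "0 \<le> q ^ m * (w * (1 - q)\<^sup>2 + r ^ t * (r - q)\<^sup>2)"
    using assms by (intro mult_nonneg_nonneg add_nonneg_nonneg) simp_all
  ultimately show "2 * (q ^ j * (w + r ^ (K - j)))
      \<le> q ^ (j - 1) * (w + r ^ (K - (j - 1))) + q ^ Suc j * (w + r ^ (K - Suc j))"
    by linarith
qed

text \<open>
One tier of hospitals, of mass \<open>H\<close>, facing doctors of mass \<open>D\<close>: the share \<open>c k\<close> of the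
doctors sends \<open>n k\<close> applications to this tier, in turn, until one of them is accepted;
each is accepted independently with probability \<open>x\<close>. Then \<open>load c x\<close> is the mean number
of applications per hospital and \<open>matched c x\<close> the mass of matched doctors per hospital,
and \<open>balanced\<close> is the tier's equation from \<open>fixed_point\<close>.
\<close>

locale tier =
  fixes D H :: real and K :: nat and n :: "nat \<Rightarrow> nat"
  assumes D_pos: "0 < D" and H_pos: "0 < H"
begin

definition load :: "(nat \<Rightarrow> real) \<Rightarrow> real \<Rightarrow> real" where
  "load c x = D / H * (\<Sum>k\<le>K. c k * (\<Sum>i<n k. (1 - x) ^ i))"

definition matched :: "(nat \<Rightarrow> real) \<Rightarrow> real \<Rightarrow> real" where
  "matched c x = D / H * (\<Sum>k\<le>K. c k * (1 - (1 - x) ^ n k))"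

definition excess :: "(nat \<Rightarrow> real) \<Rightarrow> real \<Rightarrow> real" where
  "excess c x = matched c x - (1 - exp (- load c x))"

definition balanced :: "(nat \<Rightarrow> real) \<Rightarrow> real \<Rightarrow> bool" where
  "balanced c x \<longleftrightarrow> 0 < x \<and> x \<le> 1 \<and>
     D * (\<Sum>k\<le>K. c k * (1 - (1 - x) ^ n k)) = H * (1 - exp (- load c x)) \<and>
     (load c x = 0 \<longrightarrow> x = 1)"

definition active :: "(nat \<Rightarrow> real) \<Rightarrow> bool" where
  "active c \<longleftrightarrow> (\<exists>k\<le>K. 0 < c k \<and> 0 < n k)"

definition accept :: "(nat \<Rightarrow> real) \<Rightarrow> real" where
  "accept c = (THE x. balanced c x)"

lemma matched_eq_mult_load: "matched c x = x * load c x"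
proof -
  have geometric: "1 - (1 - x) ^ m = x * (\<Sum>i<m. (1 - x) ^ i)" for m
    using one_diff_power_eq[of "1 - x" m] by simp
  show ?thesis
    unfolding matched_def load_def by (simp add: geometric sum_distrib_left algebra_simps)
qed

lemma balanced_iff_excess:
  "balanced c x \<longleftrightarrow> 0 < x \<and> x \<le> 1 \<and> excess c x = 0 \<and> (load c x = 0 \<longrightarrow> x = 1)"
  unfolding balanced_def excess_def matched_def using H_pos by (auto simp: field_simps)

lemma continuous_on_excess: "continuous_on A (excess c)"
  unfolding excess_def matched_def load_def by (intro continuous_intros)

context
  fixes c :: "nat \<Rightarrow> real"
  assumes c_nonneg: "\<forall>k\<le>K. 0 \<le> c k"
begin

lemma load_nonneg: "x \<le> 1 \<Longrightarrow> 0 \<le> load c x"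
  unfolding load_def using c_nonneg D_pos H_pos
  by (intro mult_nonneg_nonneg sum_nonneg) (auto intro!: sum_nonneg)

lemma load_antimono: "0 \<le> x \<Longrightarrow> x \<le> y \<Longrightarrow> y \<le> 1 \<Longrightarrow> load c y \<le> load c x"
  unfolding load_def using c_nonneg D_pos H_pos
  by (intro mult_left_mono sum_mono) (auto intro!: sum_mono power_mono)

lemma load_eq_0: "\<not> active c \<Longrightarrow> load c x = 0"
  unfolding load_def active_def using c_nonneg by (force intro!: sum.neutral)

lemma matched_mono: "mono_on {0..1} (matched c)"
  unfolding matched_def using c_nonneg D_pos H_pos
  by (intro mono_onI mult_left_mono sum_mono) (auto intro!: power_mono)

lemma matched_strict_mono:
  assumes "active c"
  shows "strict_mono_on {0..1} (matched c)"
proof (rule strict_mono_onI)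
  fix x y :: real assume "x \<in> {0..1}" "y \<in> {0..1}" "x < y"
  obtain k0 where k0: "k0 \<le> K" "0 < c k0" "0 < n k0" using assms active_def by auto
  have "(\<Sum>k\<le>K. c k * (1 - (1 - x) ^ n k)) < (\<Sum>k\<le>K. c k * (1 - (1 - y) ^ n k))"
  proof (rule sum_strict_mono_ex1)
    show "\<forall>k\<in>{..K}. c k * (1 - (1 - x) ^ n k) \<le> c k * (1 - (1 - y) ^ n k)"
      using c_nonneg \<open>x < y\<close> \<open>y \<in> {0..1}\<close> by (auto intro!: mult_left_mono power_mono)
    have "(1 - y) ^ n k0 < (1 - x) ^ n k0"
      using \<open>x \<in> {0..1}\<close> \<open>y \<in> {0..1}\<close> \<open>x < y\<close> k0 by (intro power_strict_mono) auto
    with k0 show "\<exists>k\<in>{..K}. c k * (1 - (1 - x) ^ n k) < c k * (1 - (1 - y) ^ n k)"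
      by (intro bexI[of _ k0]) auto
  qed simp
  then show "matched c x < matched c y"
    unfolding matched_def using D_pos H_pos by (intro mult_strict_left_mono) simp_all
qed

lemma load_pos:
  assumes "active c" "x \<in> {0..1}"
  shows "0 < load c x"
proof -
  have "matched c 0 < matched c 1"
    using strict_mono_onD[OF matched_strict_mono[OF assms(1)]] by simp
  then have "0 < load c 1" by (simp add: matched_eq_mult_load)
  also have "load c 1 \<le> load c x" using assms(2) by (intro load_antimono) auto
  finally show ?thesis .
qed

lemma excess_mono: "mono_on {0..1} (excess c)"
proof (rule mono_onI)
  fix x y :: real assume "x \<in> {0..1}" "y \<in> {0..1}" "x \<le> y"
  then have "exp (- load c x) \<le> exp (- load c y)" "matched c x \<le> matched c y"
    using load_antimono mono_onD[OF matched_mono] by auto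
  then show "excess c x \<le> excess c y" unfolding excess_def by linarith
qed

lemma excess_strict_mono: "active c \<Longrightarrow> strict_mono_on {0..1} (excess c)"
proof (rule strict_mono_onI)
  fix x y :: real assume "active c" "x \<in> {0..1}" "y \<in> {0..1}" "x < y"
  then have "exp (- load c x) \<le> exp (- load c y)" "matched c x < matched c y"
    using load_antimono strict_mono_onD[OF matched_strict_mono] by auto
  then show "excess c x < excess c y" unfolding excess_def by linarith
qed

lemma ex1_balanced: "\<exists>!x. balanced c x"
proof (cases "active c")
  case False
  then show ?thesis
    unfolding balanced_iff_excess excess_def matched_eq_mult_load
    by (intro ex1I[of _ 1]) (auto simp: load_eq_0)
next
  case True
  have neg: "excess c 0 < 0"
    using load_pos[OF True, of 0] by (simp add: excess_def matched_eq_mult_load)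
  have "0 \<le> excess c 1"
    using exp_ge_add_one_self[of "- load c 1"] by (simp add: excess_def matched_eq_mult_load)
  then obtain x where x: "x \<in> {0..1}" "excess c x = 0"
    using IVT'[OF less_imp_le[OF neg] _ zero_le_one continuous_on_excess] by auto
  with neg have "balanced c x"
    unfolding balanced_iff_excess using load_pos[OF True x(1)] by (cases "x = 0") auto
  moreover have "y = x" if "balanced c y" for y
    using strict_mono_on_eqD[OF excess_strict_mono[OF True]] x that
    unfolding balanced_iff_excess by force
  ultimately show ?thesis by blast
qed

lemma balanced_accept: "balanced c (accept c)"
  unfolding accept_def by (rule theI'[OF ex1_balanced])

lemma accept_unique: "balanced c x \<Longrightarrow> accept c = x"
  using ex1_balanced balanced_accept by blast

lemma exp_neg_load_le_accept: "exp (- load c 0) \<le> accept c"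
proof -
  define x l where "x = accept c" and "l = load c x"
  have x: "0 < x" "x \<le> 1" "x * l = 1 - exp (- l)" "l = 0 \<longrightarrow> x = 1"
    using balanced_accept unfolding x_def l_def balanced_iff_excess excess_def matched_eq_mult_load
    by auto
  have "exp (- load c 0) \<le> exp (- l)" unfolding l_def using x load_antimono by simp
  also have "exp (- l) \<le> x"
  proof (cases "l = 0")
    case False
    have "l * exp (- l) \<le> 1 - exp (- l)"
      using exp_ge_add_one_self[of l] mult_right_mono[of "1 + l" "exp l" "exp (- l)"]
      by (simp add: algebra_simps exp_minus_inverse)
    also have "\<dots> = l * x" using x(3) by (simp add: mult.commute)
    finally show ?thesis
      using False load_nonneg[of x] x(2) unfolding l_def by simp
  qed (use x in simp)
  finally show ?thesis unfolding x_def .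
qed

end

lemma continuous_on_accept:
  fixes c :: "'a::topological_space \<Rightarrow> nat \<Rightarrow> real"
  assumes nonneg: "\<And>s. s \<in> S \<Longrightarrow> \<forall>k\<le>K. 0 \<le> c s k"
    and cont: "\<And>k. continuous_on S (\<lambda>s. c s k)"
  shows "continuous_on S (\<lambda>s. accept (c s))"
  unfolding continuous_on_def
proof
  fix s0 assume "s0 \<in> S"
  have near: "\<forall>\<^sub>F s in at s0 within S. s \<in> S" by (simp add: eventually_at_filter)
  have tendsto: "(f \<longlongrightarrow> f s0) (at s0 within S)" if "continuous_on S f" for f :: "'a \<Rightarrow> real"
    using that \<open>s0 \<in> S\<close> unfolding continuous_on_def by blast
  have balanced: "accept (c s) \<in> {0..1} \<and> excess (c s) (accept (c s)) = 0" if "s \<in> S" for s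
    using balanced_accept[OF nonneg[OF that]] unfolding balanced_iff_excess by auto
  show "((\<lambda>s. accept (c s)) \<longlongrightarrow> accept (c s0)) (at s0 within S)"
  proof (cases "active (c s0)")
    case True
    show ?thesis
    proof (rule tendsto_root_of_mono_family[where G = "\<lambda>s. excess (c s)"])
      show "\<forall>\<^sub>F s in at s0 within S.
          accept (c s) \<in> {0..1} \<and> excess (c s) (accept (c s)) = 0 \<and> mono_on {0..1} (excess (c s))"
        using near by eventually_elim (use balanced excess_mono nonneg in blast)
      show "strict_mono_on {0..1} (excess (c s0))"
        using excess_strict_mono[OF nonneg[OF \<open>s0 \<in> S\<close>] True] .
      show "((\<lambda>s. excess (c s) x) \<longlongrightarrow> excess (c s0) x) (at s0 within S)" for x
        by (rule tendsto) (unfold excess_def matched_def load_def, intro continuous_intros cont)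
    qed (use balanced \<open>s0 \<in> S\<close> in auto)
  next
    case False
    \<comment> \<open>Nobody applies to the tier: the root is 1 by convention and is approached
      because \<open>exp (- load) \<le> accept \<le> 1\<close>.\<close>
    have load_0: "load (c s0) x = 0" for x using load_eq_0[OF nonneg[OF \<open>s0 \<in> S\<close>] False] .
    then have "accept (c s0) = 1"
      using balanced_accept[OF nonneg[OF \<open>s0 \<in> S\<close>]] unfolding balanced_def by auto
    have "continuous_on S (\<lambda>s. exp (- load (c s) 0))"
      unfolding load_def by (intro continuous_intros cont)
    with load_0 have lim: "((\<lambda>s. exp (- load (c s) 0)) \<longlongrightarrow> 1) (at s0 within S)"
      using tendsto by fastforce
    have lower: "\<forall>\<^sub>F s in at s0 within S. exp (- load (c s) 0) \<le> accept (c s)"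
      using near by eventually_elim (rule exp_neg_load_le_accept[OF nonneg])
    have upper: "\<forall>\<^sub>F s in at s0 within S. accept (c s) \<le> 1"
      using near by eventually_elim (use balanced in auto)
    show ?thesis
      unfolding \<open>accept (c s0) = 1\<close> by (rule tendsto_sandwich[OF lower upper lim tendsto_const])
  qed
qed

end

lemma payoff_eq_loss: "payoff K v p p' j = v - (1 - p) ^ j * (v - 1 + (1 - p') ^ (K - j))"
  unfolding payoff_def by (simp add: algebra_simps)

definition mix :: "nat \<Rightarrow> real \<Rightarrow> nat \<Rightarrow> real" where
  "mix k s j = (if j = k then 1 - s else 0) + (if j = Suc k then s else 0)"

lemma mix_1_eq: "mix k 1 = mix (Suc k) 0"
  by (auto simp: mix_def fun_eq_iff)

lemma mix_nonneg: "s \<in> {0..1} \<Longrightarrow> 0 \<le> mix k s j"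
  by (simp add: mix_def)

lemma continuous_on_mix: "continuous_on A (\<lambda>s. mix k s j)"
  unfolding mix_def by (cases "j = k"; cases "j = Suc k") (auto intro!: continuous_intros)

lemma mixed_strategy_mix:
  assumes "k \<le> K" "s \<in> {0..1}" "s = 0 \<or> k < K"
  shows "mixed_strategy K (mix k s)"
  using assms unfolding mixed_strategy_def by (auto simp: mix_nonneg mix_def sum.distrib)

lemma support_mix: "0 < mix k s j \<Longrightarrow> j = k \<or> j = Suc k"
  by (auto simp: mix_def split: if_splits)

text \<open>
A high doctor playing \<open>(k, K - k)\<close> applies to \<open>k\<close> high hospitals and, if all of them
reject him, which happens with probability \<open>(1 - p) ^ k\<close>, to \<open>K - k\<close> low hospitals.
\<close>

locale market =
  fixes K :: nat and v dH hH hL :: real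
  assumes v_gt_1: "1 < v" and dH_pos: "0 < dH" and hH_pos: "0 < hH" and hL_pos: "0 < hL"
begin

sublocale high: tier dH hH K "\<lambda>k. k"
  using dH_pos hH_pos by unfold_locales

sublocale low: tier dH hL K "\<lambda>k. K - k"
  using dH_pos hL_pos by unfold_locales

definition p_high :: "(nat \<Rightarrow> real) \<Rightarrow> real" where
  "p_high \<sigma> = high.accept \<sigma>"

definition p_low :: "(nat \<Rightarrow> real) \<Rightarrow> real" where
  "p_low \<sigma> = low.accept (\<lambda>k. \<sigma> k * (1 - p_high \<sigma>) ^ k)"

definition loss :: "(nat \<Rightarrow> real) \<Rightarrow> nat \<Rightarrow> real" where
  "loss \<sigma> j = (1 - p_high \<sigma>) ^ j * (v - 1 + (1 - p_low \<sigma>) ^ (K - j))"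

lemma fixed_point_iff_balanced:
  "fixed_point K dH hH hL \<sigma> p p' \<longleftrightarrow>
     high.balanced \<sigma> p \<and> low.balanced (\<lambda>k. \<sigma> k * (1 - p) ^ k) p'"
  unfolding fixed_point_def high.balanced_def low.balanced_def high.load_def low.load_def
    lamH_def lamL_def
  by auto

context
  fixes \<sigma> :: "nat \<Rightarrow> real"
  assumes \<sigma>_nonneg: "\<forall>k\<le>K. 0 \<le> \<sigma> k"
begin

lemma low_weights_nonneg: "p \<le> 1 \<Longrightarrow> \<forall>k\<le>K. 0 \<le> \<sigma> k * (1 - p) ^ k"
  using \<sigma>_nonneg by simp

lemma p_high_bounds: "0 < p_high \<sigma>" "p_high \<sigma> \<le> 1"
  using high.balanced_accept[OF \<sigma>_nonneg] unfolding p_high_def high.balanced_def by auto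

lemma p_low_bounds: "0 < p_low \<sigma>" "p_low \<sigma> \<le> 1"
  using low.balanced_accept[OF low_weights_nonneg[OF p_high_bounds(2)]]
  unfolding p_low_def low.balanced_def by auto

lemma fixed_point_iff:
  "fixed_point K dH hH hL \<sigma> p p' \<longleftrightarrow> p = p_high \<sigma> \<and> p' = p_low \<sigma>"
proof
  assume "fixed_point K dH hH hL \<sigma> p p'"
  then have high: "high.balanced \<sigma> p" and low: "low.balanced (\<lambda>k. \<sigma> k * (1 - p) ^ k) p'"
    unfolding fixed_point_iff_balanced by auto
  have "p = p_high \<sigma>"
    unfolding p_high_def using high.accept_unique[OF \<sigma>_nonneg high] by simp
  moreover have "p \<le> 1" using high unfolding high.balanced_def by simp
  ultimately show "p = p_high \<sigma> \<and> p' = p_low \<sigma>"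
    unfolding p_low_def using low.accept_unique[OF low_weights_nonneg low] by simp
next
  assume "p = p_high \<sigma> \<and> p' = p_low \<sigma>"
  then show "fixed_point K dH hH hL \<sigma> p p'"
    unfolding fixed_point_iff_balanced p_high_def p_low_def
    using high.balanced_accept[OF \<sigma>_nonneg] p_high_bounds
      low.balanced_accept[OF low_weights_nonneg] by (simp add: p_high_def)
qed

lemma discrete_convex_loss: "discrete_convex K (loss \<sigma>)"
  unfolding loss_def
  using discrete_convex_power_mix p_high_bounds p_low_bounds v_gt_1 by simp

end

lemma symmetric_equilibrium_if_local_min:
  assumes \<sigma>: "mixed_strategy K \<sigma>" and "k \<le> K"
    and down: "0 < k \<Longrightarrow> loss \<sigma> k \<le> loss \<sigma> (k - 1)"
    and up: "k < K \<Longrightarrow> loss \<sigma> k \<le> loss \<sigma> (Suc k)"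
    and support: "\<And>j. j \<le> K \<Longrightarrow> 0 < \<sigma> j \<Longrightarrow> loss \<sigma> j = loss \<sigma> k"
  shows "symmetric_equilibrium_high K v dH hH hL \<sigma>"
proof -
  have nonneg: "\<forall>k\<le>K. 0 \<le> \<sigma> k" using \<sigma> unfolding mixed_strategy_def by auto
  have "loss \<sigma> k \<le> loss \<sigma> j" if "j \<le> K" for j
    using discrete_convex_local_min_is_min[OF discrete_convex_loss[OF nonneg]] assms that
    by blast
  then have "best_responses K v \<sigma> (p_high \<sigma>) (p_low \<sigma>)"
    unfolding best_responses_def payoff_eq_loss using support
    by (simp add: loss_def[symmetric])
  then show ?thesis
    unfolding symmetric_equilibrium_high_def fixed_point_iff[OF nonneg] using \<sigma> by auto
qed

lemma continuous_on_loss: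
  fixes \<sigma> :: "'a::topological_space \<Rightarrow> nat \<Rightarrow> real"
  assumes nonneg: "\<And>s. s \<in> S \<Longrightarrow> \<forall>k\<le>K. 0 \<le> \<sigma> s k"
    and cont: "\<And>k. continuous_on S (\<lambda>s. \<sigma> s k)"
  shows "continuous_on S (\<lambda>s. loss (\<sigma> s) j)"
proof -
  have high: "continuous_on S (\<lambda>s. p_high (\<sigma> s))"
    unfolding p_high_def by (rule high.continuous_on_accept[OF nonneg cont])
  have "continuous_on S (\<lambda>s. p_low (\<sigma> s))"
    unfolding p_low_def
  proof (rule low.continuous_on_accept)
    show "\<forall>k\<le>K. 0 \<le> \<sigma> s k * (1 - p_high (\<sigma> s)) ^ k" if "s \<in> S" for s
      using low_weights_nonneg[OF nonneg[OF that] p_high_bounds(2)[OF nonneg[OF that]]] .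
    show "continuous_on S (\<lambda>s. \<sigma> s k * (1 - p_high (\<sigma> s)) ^ k)" for k
      by (intro continuous_intros cont high)
  qed
  with high show ?thesis
    unfolding loss_def by (intro continuous_intros)
qed

lemma symmetric_equilibrium_pure:
  assumes "k \<le> K"
    and "0 < k \<Longrightarrow> loss (mix k 0) k \<le> loss (mix k 0) (k - 1)"
    and "k < K \<Longrightarrow> loss (mix k 0) k \<le> loss (mix k 0) (Suc k)"
  shows "symmetric_equilibrium_high K v dH hH hL (mix k 0)"
  using assms by (intro symmetric_equilibrium_if_local_min mixed_strategy_mix)
    (auto simp: mix_def split: if_splits)

lemma symmetric_equilibrium_between:
  assumes "k < K"
    and "loss (mix k 0) (Suc k) \<le> loss (mix k 0) k"
    and "loss (mix k 1) k \<le> loss (mix k 1) (Suc k)"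
  shows "\<exists>\<sigma>. symmetric_equilibrium_high K v dH hH hL \<sigma>"
proof -
  define gain where "gain s = loss (mix k s) k - loss (mix k s) (Suc k)" for s
  have "continuous_on {0..1} gain"
    unfolding gain_def
    by (intro continuous_intros continuous_on_loss continuous_on_mix) (auto simp: mix_nonneg)
  moreover have "gain 1 \<le> 0" "0 \<le> gain 0"
    using assms(2,3) unfolding gain_def by simp_all
  ultimately obtain s where s: "s \<in> {0..1}" "gain s = 0"
    using IVT2'[of gain 1 0 0] by auto
  define \<sigma> where "\<sigma> = mix k s"
  have tie: "loss \<sigma> k = loss \<sigma> (Suc k)"
    using s(2) unfolding gain_def \<sigma>_def by simp
  have \<sigma>: "mixed_strategy K \<sigma>"
    unfolding \<sigma>_def using mixed_strategy_mix assms(1) s(1) by simp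
  then have "discrete_convex K (loss \<sigma>)"
    using discrete_convex_loss unfolding mixed_strategy_def by blast
  then have "2 * loss \<sigma> k \<le> loss \<sigma> (k - 1) + loss \<sigma> (Suc k)" if "0 < k"
    using that assms(1) unfolding discrete_convex_def by blast
  with tie have down: "loss \<sigma> k \<le> loss \<sigma> (k - 1)" if "0 < k"
    using that by fastforce
  have support: "loss \<sigma> j = loss \<sigma> k" if "0 < \<sigma> j" for j
    using support_mix[of k s j] that tie unfolding \<sigma>_def by auto
  have "symmetric_equilibrium_high K v dH hH hL \<sigma>"
    by (rule symmetric_equilibrium_if_local_min[OF \<sigma>, of k])
      (use down support tie assms(1) in auto)
  then show ?thesis by blast
qed

lemma exists_symmetric_equilibrium: "\<exists>\<sigma>. symmetric_equilibrium_high K v dH hH hL \<sigma>"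
proof -
  define stays where "stays k \<longleftrightarrow> (k < K \<longrightarrow> loss (mix k 0) k \<le> loss (mix k 0) (Suc k))" for k
  define k where "k = (LEAST k. stays k)"
  have "stays K" unfolding stays_def by simp
  then have k: "k \<le> K" "stays k" and below: "\<And>i. i < k \<Longrightarrow> \<not> stays i"
    unfolding k_def by (auto intro: Least_le LeastI dest: not_less_Least)
  show ?thesis
  proof (cases "0 < k \<longrightarrow> loss (mix k 0) k \<le> loss (mix k 0) (k - 1)")
    case True
    with k have "symmetric_equilibrium_high K v dH hH hL (mix k 0)"
      unfolding stays_def by (intro symmetric_equilibrium_pure) auto
    then show ?thesis by blast
  next
    case False
    then have "0 < k" and drop: "loss (mix k 0) (k - 1) < loss (mix k 0) k" by auto
    then obtain m where m: "k = Suc m" using gr0_implies_Suc by blast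
    have "m < K" using k m by simp
    with below[of m] m have "loss (mix m 0) (Suc m) \<le> loss (mix m 0) m"
      unfolding stays_def by simp
    moreover have "loss (mix m 1) m \<le> loss (mix m 1) (Suc m)"
      using drop unfolding m mix_1_eq by simp
    ultimately show ?thesis using symmetric_equilibrium_between \<open>m < K\<close> by blast
  qed
qed

end

theorem lemma2:
  fixes K :: nat and v dH hH hL :: real
  assumes "v > 1" and "dH > 0" and "hH > 0" and "hL > 0"
  shows "\<exists>\<sigma>. symmetric_equilibrium_high K v dH hH hL \<sigma>"
proof -
  interpret market K v dH hH hL
    using assms by unfold_locales
  show ?thesis by (rule exists_symmetric_equilibrium)
qed

end
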